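(* Let $I$ be a list of items with sizes in $(1/3,1]$ whose optimal packing consists of $k=\mathrm{OPT}(I)$ bins, each containing exactly one large item and one medium item; for $i\in[k]$ let $l_i$ and $m_i$ be the large and the medium item of the $i$-th bin of this optimal packing. Let $\pi\in\mathcal{S}_n$ be any permutation and let $X$ be the number of indices $i\in[k]$ such that $l_i$ arrives before $m_i$ in $I^\pi$. Then the Best Fit packing of $I^\pi$ contains at least $X$ bins that each consist of exactly one large item and one medium item.
   Context: An item of size $x$ is large if $x>1/2$ and medium if $x\in(1/3,1/2]$. Bin packing: items with sizes in $(0,1]$ are packed into unit-capacity bins (total size per bin at most $1$); $\mathrm{OPT}(I)$ is the minimum number of bins. The online algorithm Best Fit processes the items in the given order and packs the current item into the fullest bin (largest current load) into which it fits, opening a new bin if it fits into no existing bin; items are never moved. For $\pi\in\mathcal{S}_n$ (permutations of $[n]$) and $I=(x_1,\ldots,x_n)$, $I^\pi=(x_{\pi(1)},\ldots,x_{\pi(n)})$. *)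

theory Defs
  imports Complex_Main "HOL-Library.Multiset" "HOL-Combinatorics.Permutations"
begin

text \<open>Items are identified by their indices 0..n-1 in the list I; item i has size I!i.
  A bin is a list of item indices.\<close>

definition large :: "real \<Rightarrow> bool" where
  "large x \<longleftrightarrow> x > 1/2"

definition medium :: "real \<Rightarrow> bool" where
  "medium x \<longleftrightarrow> 1/3 < x \<and> x \<le> 1/2"

definition load :: "real list \<Rightarrow> nat list \<Rightarrow> real" where
  "load I B = sum_list (map (\<lambda>i. I ! i) B)"

definition is_packing :: "real list \<Rightarrow> nat list list \<Rightarrow> bool" where
  "is_packing I P \<longleftrightarrow> mset (concat P) = mset [0..<length I] \<and> (\<forall>B\<in>set P. load I B \<le> 1)"

definition OPT :: "real list \<Rightarrow> nat" where
  "OPT I = (LEAST k. \<exists>P. is_packing I P \<and> length P = k)"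

text \<open>One step of Best Fit: item i goes into a fullest bin into which it fits
  (any such bin, i.e. arbitrary tie-breaking), or into a new bin if it fits nowhere.\<close>
definition bf_step :: "real list \<Rightarrow> nat list list \<Rightarrow> nat \<Rightarrow> nat list list \<Rightarrow> bool" where
  "bf_step I bins i bins' \<longleftrightarrow>
     ((\<forall>B\<in>set bins. load I B + I ! i > 1) \<and> bins' = bins @ [[i]]) \<or>
     (\<exists>j<length bins. load I (bins ! j) + I ! i \<le> 1 \<and>
        (\<forall>j'<length bins. load I (bins ! j') + I ! i \<le> 1 \<longrightarrow> load I (bins ! j') \<le> load I (bins ! j)) \<and>
        bins' = bins[j := bins ! j @ [i]])"

inductive bf_pack :: "real list \<Rightarrow> nat list \<Rightarrow> nat list list \<Rightarrow> bool" for I where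
  Nil: "bf_pack I [] []"
| snoc: "bf_pack I xs bins \<Longrightarrow> bf_step I bins i bins' \<Longrightarrow> bf_pack I (xs @ [i]) bins'"

definition is_LM_bin :: "real list \<Rightarrow> nat list \<Rightarrow> bool" where
  "is_LM_bin I B \<longleftrightarrow> (\<exists>a b. mset B = {#a, b#} \<and> large (I ! a) \<and> medium (I ! b))"

end

theory Submission
  imports Defs
begin

(* All items exceed 1/3, so every Best Fit bin holds one or two items and only single-item bins
   can receive another item.  Writing inv \<pi> x for the arrival time of item x, call pair i started
   at time t if l i arrived before time t and before m i, and pending if m i has not arrived yet.
   The invariant is  #started pairs \<le> #LM bins + |D|,  where D is a set of pending pairs matched
   injectively to bins holding a single large item into which the partner m i still fits.
   A large item either opens a bin that becomes the matched bin of its own pair, or joins a medium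
   item and creates an LM bin.  A medium item that closes no matched pair spoils at most one matched
   bin, and only by turning it into an LM bin.  If m i closes a matched pair i, Best Fit puts it into
   a single large bin at least as full as the bin matched to i; this creates an LM bin, and the pair
   matched to the filled bin takes over the bin of i.  At the end no pair is pending. *)

abbreviation LM_bins :: "real list \<Rightarrow> nat list list \<Rightarrow> nat" where
  "LM_bins I bins \<equiv> length (filter (is_LM_bin I) bins)"

lemma length_filter_list_update:
  "j < length xs \<Longrightarrow>
   length (filter P (xs[j := y])) + (if P (xs ! j) then 1 else 0) =
   length (filter P xs) + (if P y then 1 else 0)"
proof (induction xs arbitrary: j)
  case (Cons a xs)
  then show ?case
    by (cases j) (simp_all add: Cons.IH)
qed simp

lemma not_is_LM_bin_single: "\<not> is_LM_bin I [x]"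
  by (auto simp: is_LM_bin_def)

lemma is_LM_bin_pairI:
  "large (I ! a) \<and> medium (I ! b) \<or> medium (I ! a) \<and> large (I ! b) \<Longrightarrow> is_LM_bin I [a, b]"
  unfolding is_LM_bin_def by (metis add_mset_commute mset.simps)

lemma LM_bins_append_single: "LM_bins I (bins @ [[x]]) = LM_bins I bins"
  by (simp add: not_is_LM_bin_single)

lemma LM_bins_fill:
  assumes "j < length bins" "bins ! j = [x]"
  shows "LM_bins I (bins[j := [x, c]]) = LM_bins I bins + (if is_LM_bin I [x, c] then 1 else 0)"
  using length_filter_list_update[OF assms(1), of "is_LM_bin I" "[x, c]"] assms(2)
  by (simp add: not_is_LM_bin_single)

lemma load_single [simp]: "load I [x] = I ! x"
  by (simp add: load_def)

lemma load_pair [simp]: "load I [x, y] = I ! x + I ! y"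
  by (simp add: load_def)

lemma bf_pack_snocE:
  assumes "bf_pack I (xs @ [x]) bins'"
  obtains bins where "bf_pack I xs bins" "bf_step I bins x bins'"
  using assms by (cases rule: bf_pack.cases) auto

lemma inj_on_extend_fresh:
  fixes f :: "'a \<Rightarrow> 'b::order"
  assumes "inj_on f A" "f ` A \<subseteq> {..<n}" "finite B" "card B \<le> 1" "A \<inter> B = {}"
  shows "inj_on (\<lambda>x. if x \<in> B then n else f x) (A \<union> B)"
proof -
  have "x = y" if "x \<in> B" "y \<in> B" for x y
    using assms(3,4) that by (auto simp: card_le_Suc0_iff_eq)
  moreover have "f x \<noteq> n" if "x \<in> A" for x
    using assms(2) that by auto
  ultimately show ?thesis
    using assms(1,5) by (auto simp: inj_on_def)
qed

locale items_above_third =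
  fixes I :: "real list"
  assumes sizes: "\<forall>x\<in>set I. 1/3 < x \<and> x \<le> 1"
begin

lemma item_size: "x < length I \<Longrightarrow> 1/3 < I ! x \<and> I ! x \<le> 1"
  using sizes by (auto dest: nth_mem)

definition one_or_two_items :: "nat list list \<Rightarrow> bool" where
  "one_or_two_items bins \<longleftrightarrow>
     (\<forall>B\<in>set bins. (\<exists>x<length I. B = [x]) \<or> (\<exists>x<length I. \<exists>y<length I. B = [x, y]))"

lemma fitting_bin_single:
  assumes "one_or_two_items bins" "B \<in> set bins" "c < length I" "load I B + I ! c \<le> 1"
  shows "\<exists>x<length I. B = [x]"
proof -
  have "\<nexists>x y. x < length I \<and> y < length I \<and> B = [x, y]"
    using assms(3,4) item_size[of c] by (auto dest!: item_size)
  then show ?thesis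
    using assms(1,2) unfolding one_or_two_items_def by blast
qed

lemma bf_step_cases [consumes 3]:
  assumes "one_or_two_items bins" "c < length I" "bf_step I bins c bins'"
  obtains (new_bin) "\<forall>B\<in>set bins. load I B + I ! c > 1" "bins' = bins @ [[c]]"
  | (fill) j x where "j < length bins" "bins ! j = [x]" "x < length I" "I ! x + I ! c \<le> 1"
      "\<forall>j'<length bins. load I (bins ! j') + I ! c \<le> 1 \<longrightarrow> load I (bins ! j') \<le> I ! x"
      "bins' = bins[j := [x, c]]"
  using assms(3) unfolding bf_step_def
proof (elim disjE exE conjE)
  fix j assume j: "j < length bins" and fit: "load I (bins ! j) + I ! c \<le> 1"
    and best: "\<forall>j'<length bins. load I (bins ! j') + I ! c \<le> 1 \<longrightarrow> load I (bins ! j') \<le> load I (bins ! j)"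
    and upd: "bins' = bins[j := bins ! j @ [c]]"
  obtain x where "x < length I" "bins ! j = [x]"
    using fitting_bin_single[OF assms(1) nth_mem[OF j] assms(2) fit] by blast
  then show thesis
    using fill[OF j] fit best upd by simp
qed (rule new_bin)

lemma one_or_two_items_bf_step:
  assumes "one_or_two_items bins" "c < length I" "bf_step I bins c bins'"
  shows "one_or_two_items bins'"
  using assms
proof (cases rule: bf_step_cases)
  case new_bin
  then show ?thesis using assms(1,2) by (auto simp: one_or_two_items_def)
next
  case (fill j x)
  then show ?thesis using assms(1,2) unfolding one_or_two_items_def
    by (auto dest!: set_update_subset_insert[THEN subsetD])
qed

end

locale LM_pairs = items_above_third +
  fixes k :: nat and l m \<pi> :: "nat \<Rightarrow> nat"
  assumes pair_items: "\<And>i. i < k \<Longrightarrow> l i < length I \<and> m i < length I"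
    and pair_sizes: "\<And>i. i < k \<Longrightarrow> large (I ! l i) \<and> medium (I ! m i) \<and> I ! l i + I ! m i \<le> 1"
    and inj_l: "inj_on l {..<k}" and inj_m: "inj_on m {..<k}"
    and perm: "\<pi> permutes {..<length I}"
begin

lemma inv_perm_eq_iff: "inv \<pi> x = t \<longleftrightarrow> x = \<pi> t"
  using permutes_inv_eq[OF perm] by auto

lemma inv_perm_apply [simp]: "inv \<pi> (\<pi> t) = t"
  by (simp add: inv_perm_eq_iff)

lemma perm_less: "t < length I \<Longrightarrow> \<pi> t < length I"
  using permutes_in_image[OF perm] by simp

lemma inv_perm_less: "x < length I \<Longrightarrow> inv \<pi> x < length I"
  using permutes_in_image[OF permutes_inv[OF perm]] by simp

definition started :: "nat \<Rightarrow> nat set" where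
  "started t = {i. i < k \<and> inv \<pi> (l i) < inv \<pi> (m i) \<and> inv \<pi> (l i) < t}"

definition pending :: "nat \<Rightarrow> nat set" where
  "pending t = {i. i < k \<and> inv \<pi> (l i) < t \<and> t \<le> inv \<pi> (m i)}"

definition opened :: "nat \<Rightarrow> nat set" where
  "opened t = {i \<in> pending (Suc t). l i = \<pi> t}"

lemma finite_pending [simp]: "finite (pending t)"
  by (simp add: pending_def)

lemma finite_opened [simp]: "finite (opened t)"
  by (simp add: opened_def)

lemma started_Suc: "started (Suc t) = started t \<union> opened t"
  unfolding started_def opened_def pending_def
  using inv_perm_eq_iff by (auto simp: less_Suc_eq)

lemma pending_Suc: "pending (Suc t) = (pending t - {i. m i = \<pi> t}) \<union> opened t"
  unfolding opened_def pending_def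
  using inv_perm_eq_iff by (auto simp: less_Suc_eq Suc_le_eq le_less)

lemma pending_inter_opened: "pending t \<inter> opened t = {}"
  unfolding opened_def pending_def using inv_perm_eq_iff by auto

lemma card_opened_le_1: "card (opened t) \<le> 1"
proof -
  have "card (opened t) \<le> card (l -` {\<pi> t} \<inter> {..<k})"
    by (rule card_mono) (auto simp: opened_def pending_def)
  also have "\<dots> \<le> card {\<pi> t}"
    by (rule card_vimage_inj_on_le[OF inj_l]) simp
  finally show ?thesis by simp
qed

lemma pending_Suc_large: "large (I ! \<pi> t) \<Longrightarrow> pending (Suc t) = pending t \<union> opened t"
  using pending_Suc pair_sizes by (force simp: pending_def large_def medium_def)

lemma opened_medium: "\<not> large (I ! \<pi> t) \<Longrightarrow> opened t = {}"
  using pair_sizes by (force simp: opened_def pending_def)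

lemma pending_Suc_medium: "\<not> large (I ! \<pi> t) \<Longrightarrow> pending (Suc t) = pending t - {i. m i = \<pi> t}"
  using pending_Suc opened_medium by simp

definition witness_bin :: "nat list list \<Rightarrow> nat \<Rightarrow> nat \<Rightarrow> bool" where
  "witness_bin bins i b \<longleftrightarrow> b < length bins \<and> (\<exists>x. bins ! b = [x] \<and> large (I ! x) \<and> I ! x + I ! m i \<le> 1)"

definition matching :: "nat \<Rightarrow> nat list list \<Rightarrow> nat set \<Rightarrow> (nat \<Rightarrow> nat) \<Rightarrow> bool" where
  "matching t bins D \<phi> \<longleftrightarrow> D \<subseteq> pending t \<and> inj_on \<phi> D \<and> (\<forall>i\<in>D. witness_bin bins i (\<phi> i))"

lemma finite_matching: "matching t bins D \<phi> \<Longrightarrow> finite D"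
  unfolding matching_def using finite_pending finite_subset by blast

lemma witness_bin_append: "witness_bin bins i b \<Longrightarrow> witness_bin (bins @ bs) i b"
  by (auto simp: witness_bin_def nth_append)

lemma witness_bin_update: "witness_bin bins i b \<Longrightarrow> b \<noteq> j \<Longrightarrow> witness_bin (bins[j := B]) i b"
  by (simp add: witness_bin_def)

lemma witness_bin_neq: "witness_bin bins i b \<Longrightarrow> bins ! j = [x] \<Longrightarrow> \<not> large (I ! x) \<Longrightarrow> b \<noteq> j"
  by (auto simp: witness_bin_def)

lemma witness_bin_load: "witness_bin bins i b \<Longrightarrow> 1/2 < load I (bins ! b) \<and> load I (bins ! b) + I ! m i \<le> 1"
  by (auto simp: witness_bin_def large_def)

lemma matching_step_large:
  assumes t: "t < length I" and c: "large (I ! \<pi> t)" and bins: "one_or_two_items bins"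
    and M: "matching t bins D \<phi>" and step: "bf_step I bins (\<pi> t) bins'"
  obtains D' \<phi>' where "matching (Suc t) bins' D' \<phi>'"
    "card D + card (opened t) + LM_bins I bins \<le> card D' + LM_bins I bins'"
  using bins perm_less[OF t] step
proof (cases rule: bf_step_cases)
  case new_bin
  define \<phi>' where "\<phi>' i = (if i \<in> opened t then length bins else \<phi> i)" for i
  have D: "D \<subseteq> pending t" "inj_on \<phi> D" "\<forall>i\<in>D. witness_bin bins i (\<phi> i)"
    using M by (auto simp: matching_def)
  have disj: "D \<inter> opened t = {}"
    using D(1) pending_inter_opened by blast
  have "inj_on \<phi>' (D \<union> opened t)"
    unfolding \<phi>'_def using D(2,3) card_opened_le_1 disj
    by (intro inj_on_extend_fresh) (auto simp: witness_bin_def)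
  moreover have "witness_bin bins' i (\<phi>' i)" if "i \<in> D \<union> opened t" for i
  proof (cases "i \<in> opened t")
    case True
    then have "i < k" "l i = \<pi> t"
      by (auto simp: opened_def pending_def)
    then show ?thesis
      using True c pair_sizes[of i] new_bin(2) by (simp add: \<phi>'_def witness_bin_def)
  qed (use that D(3) new_bin(2) witness_bin_append in \<open>auto simp: \<phi>'_def\<close>)
  moreover have "D \<union> opened t \<subseteq> pending (Suc t)"
    using D(1) pending_Suc_large[OF c] by blast
  moreover have "card (D \<union> opened t) = card D + card (opened t)"
    using D(1) disj by (intro card_Un_disjoint) (auto intro: finite_subset)
  ultimately show ?thesis
    using that[of "D \<union> opened t" \<phi>'] new_bin(2) LM_bins_append_single
    by (simp add: matching_def)
next
  case (fill j x)
  have "medium (I ! x)"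
    using fill(3,4) item_size[of x] c by (simp add: large_def medium_def)
  then have "LM_bins I bins' = LM_bins I bins + 1"
    using fill(1,2,6) c LM_bins_fill is_LM_bin_pairI by simp
  moreover have "matching (Suc t) bins' D \<phi>"
  proof -
    have "\<not> large (I ! x)"
      using \<open>medium (I ! x)\<close> by (simp add: large_def medium_def)
    then have "\<phi> i \<noteq> j" if "i \<in> D" for i
      using M that fill(2) witness_bin_neq unfolding matching_def by blast
    then show ?thesis
      using M fill(6) pending_Suc_large[OF c] witness_bin_update by (auto simp: matching_def)
  qed
  ultimately show ?thesis
    using that[of D \<phi>] card_opened_le_1 by simp
qed

lemma bf_step_witness:
  assumes "one_or_two_items bins" "c < length I" "bf_step I bins c bins'"
    and wit: "witness_bin bins i b" and c: "m i = c"
  obtains j x where "j < length bins" "bins ! j = [x]" "large (I ! x)" "load I (bins ! b) \<le> I ! x"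
    "bins' = bins[j := [x, c]]"
  using assms(1-3)
proof (cases rule: bf_step_cases)
  case new_bin
  have "bins ! b \<in> set bins"
    using wit by (simp add: witness_bin_def)
  then show ?thesis
    using new_bin(1) witness_bin_load[OF wit] c by fastforce
next
  case (fill j x)
  have "load I (bins ! b) \<le> I ! x"
    using fill(5) wit witness_bin_load[OF wit] c by (simp add: witness_bin_def)
  moreover have "large (I ! x)"
    using calculation witness_bin_load[OF wit] by (simp add: large_def)
  ultimately show ?thesis
    using that fill by blast
qed

lemma matching_step_closing:
  assumes t: "t < length I" and bins: "one_or_two_items bins" and M: "matching t bins D \<phi>"
    and i0: "i0 \<in> D" "m i0 = \<pi> t" and step: "bf_step I bins (\<pi> t) bins'"
  obtains D' \<phi>' where "matching (Suc t) bins' D' \<phi>'" "card D + LM_bins I bins \<le> card D' + LM_bins I bins'"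
proof -
  have D: "D \<subseteq> {..<k}" "D \<subseteq> pending t" "inj_on \<phi> D" "\<forall>i\<in>D. witness_bin bins i (\<phi> i)"
    using M by (auto simp: matching_def pending_def)
  have c: "medium (I ! \<pi> t)"
    using i0 D(1) pair_sizes[of i0] by auto
  obtain j x where fill: "j < length bins" "bins ! j = [x]" "large (I ! x)"
    "load I (bins ! \<phi> i0) \<le> I ! x" "bins' = bins[j := [x, \<pi> t]]"
    using bf_step_witness[OF bins perm_less[OF t] step] D(4) i0 by blast
  define \<phi>' where "\<phi>' = Transposition.transpose j (\<phi> i0) \<circ> \<phi>"
  have "inj_on \<phi>' (D - {i0})"
    unfolding \<phi>'_def using D(3)
    by (intro comp_inj_on inj_on_diff) (auto intro: inj_on_subset[OF inj_transpose])
  moreover have "witness_bin bins' i (\<phi>' i)" if i: "i \<in> D - {i0}" for i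
  proof -
    have "\<phi> i \<noteq> \<phi> i0"
      using i i0(1) D(3) by (auto dest: inj_onD)
    show ?thesis
    proof (cases "\<phi> i = j")
      case True
      obtain y where y: "bins ! \<phi> i0 = [y]" "large (I ! y)"
        using D(4) i0(1) by (auto simp: witness_bin_def)
      have "I ! x + I ! m i \<le> 1"
        using D(4) i True fill(2) by (auto simp: witness_bin_def)
      then have "witness_bin bins i (\<phi> i0)"
        using D(4) i0(1) y fill(4) by (auto simp: witness_bin_def)
      then show ?thesis
        using True \<open>\<phi> i \<noteq> \<phi> i0\<close> fill(5) witness_bin_update by (simp add: \<phi>'_def)
    next
      case False
      then show ?thesis
        using D(4) i \<open>\<phi> i \<noteq> \<phi> i0\<close> fill(5) witness_bin_update by (simp add: \<phi>'_def)
    qed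
  qed
  moreover have "D - {i0} \<subseteq> pending (Suc t)"
  proof -
    have "m i \<noteq> \<pi> t" if "i \<in> D - {i0}" for i
      using that i0 D(1) inj_onD[OF inj_m, of i i0] by auto
    moreover have "\<not> large (I ! \<pi> t)"
      using c by (simp add: large_def medium_def)
    ultimately show ?thesis
      using D(2) pending_Suc_medium by blast
  qed
  moreover have "LM_bins I bins' = LM_bins I bins + 1"
    using fill(1,2,3,5) c LM_bins_fill is_LM_bin_pairI[of I x "\<pi> t"] by simp
  moreover have "card D = card (D - {i0}) + 1"
    using i0(1) finite_subset[OF D(2)] card_Suc_Diff1[of D i0] by simp
  ultimately show ?thesis
    using that[of "D - {i0}" \<phi>'] by (simp add: matching_def)
qed

lemma matching_step_nonclosing:
  assumes t: "t < length I" and c: "\<not> large (I ! \<pi> t)" and bins: "one_or_two_items bins"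
    and M: "matching t bins D \<phi>" and open_pairs: "\<forall>i\<in>D. m i \<noteq> \<pi> t"
    and step: "bf_step I bins (\<pi> t) bins'"
  obtains D' \<phi>' where "matching (Suc t) bins' D' \<phi>'" "card D + LM_bins I bins \<le> card D' + LM_bins I bins'"
  using bins perm_less[OF t] step
proof (cases rule: bf_step_cases)
  case new_bin
  then have "matching (Suc t) bins' D \<phi>"
    using M open_pairs pending_Suc_medium[OF c] witness_bin_append by (auto simp: matching_def)
  then show ?thesis
    using that new_bin(2) LM_bins_append_single by simp
next
  case (fill j x)
  define D' where "D' = {i \<in> D. \<phi> i \<noteq> j}"
  have "matching (Suc t) bins' D' \<phi>"
    using M open_pairs pending_Suc_medium[OF c] fill(6) witness_bin_update
    by (auto simp: matching_def D'_def intro: inj_on_subset)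
  moreover have "card D + LM_bins I bins \<le> card D' + LM_bins I bins'"
  proof (cases "large (I ! x)")
    case True
    have "card D \<le> card (D' \<union> (\<phi> -` {j} \<inter> D))"
      using finite_matching[OF M] by (intro card_mono) (auto simp: D'_def)
    also have "\<dots> \<le> card D' + card (\<phi> -` {j} \<inter> D)"
      by (rule card_Un_le)
    also have "\<dots> \<le> card D' + 1"
      using card_vimage_inj_on_le[of \<phi> D "{j}"] M by (simp add: matching_def)
    finally show ?thesis
      using True c item_size[OF perm_less[OF t]] fill(1,2,6) LM_bins_fill is_LM_bin_pairI[of I x "\<pi> t"]
      by (simp add: large_def medium_def)
  next
    case False
    then have "D' = D"
      using M fill(2) by (auto simp: matching_def D'_def witness_bin_def)
    then show ?thesis
      using fill(1,2,6) LM_bins_fill by simp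
  qed
  ultimately show ?thesis
    using that by blast
qed

lemma matching_step_medium:
  assumes t: "t < length I" and c: "\<not> large (I ! \<pi> t)" and bins: "one_or_two_items bins"
    and M: "matching t bins D \<phi>" and step: "bf_step I bins (\<pi> t) bins'"
  obtains D' \<phi>' where "matching (Suc t) bins' D' \<phi>'" "card D + LM_bins I bins \<le> card D' + LM_bins I bins'"
proof (cases "\<exists>i0\<in>D. m i0 = \<pi> t")
  case True
  then obtain i0 where "i0 \<in> D" "m i0 = \<pi> t"
    by blast
  show ?thesis
    by (rule matching_step_closing[OF t bins M \<open>i0 \<in> D\<close> \<open>m i0 = \<pi> t\<close> step]) (rule that)
next
  case False
  then have "\<forall>i\<in>D. m i \<noteq> \<pi> t"
    by blast
  show ?thesis
    by (rule matching_step_nonclosing[OF t c bins M \<open>\<forall>i\<in>D. m i \<noteq> \<pi> t\<close> step]) (rule that)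
qed

definition bf_invariant :: "nat \<Rightarrow> nat list list \<Rightarrow> bool" where
  "bf_invariant t bins \<longleftrightarrow> one_or_two_items bins \<and>
     (\<exists>D \<phi>. matching t bins D \<phi> \<and> card (started t) \<le> card D + LM_bins I bins)"

lemma bf_invariant_Nil: "bf_invariant 0 []"
  by (auto simp: bf_invariant_def one_or_two_items_def matching_def started_def intro!: exI[of _ "{}"])

lemma bf_invariant_step:
  assumes t: "t < length I" and inv: "bf_invariant t bins" and step: "bf_step I bins (\<pi> t) bins'"
  shows "bf_invariant (Suc t) bins'"
proof -
  obtain D \<phi> where bins: "one_or_two_items bins" and M: "matching t bins D \<phi>"
    and card: "card (started t) \<le> card D + LM_bins I bins"
    using inv by (auto simp: bf_invariant_def)
  have started: "card (started (Suc t)) \<le> card (started t) + card (opened t)"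
    unfolding started_Suc by (rule card_Un_le)
  obtain D' \<phi>' where M': "matching (Suc t) bins' D' \<phi>'"
    and "card D + card (opened t) + LM_bins I bins \<le> card D' + LM_bins I bins'"
  proof (cases "large (I ! \<pi> t)")
    case True
    show ?thesis
      by (rule matching_step_large[OF t True bins M step]) (rule that)
  next
    case False
    obtain D' \<phi>' where "matching (Suc t) bins' D' \<phi>'"
      "card D + LM_bins I bins \<le> card D' + LM_bins I bins'"
      by (rule matching_step_medium[OF t False bins M step])
    then show ?thesis
      using that[of D' \<phi>'] opened_medium[OF False] by simp
  qed
  then show ?thesis
    using one_or_two_items_bf_step[OF bins perm_less[OF t] step] started card
    unfolding bf_invariant_def by fastforce
qed

lemma bf_invariant_bf_pack: "t \<le> length I \<Longrightarrow> bf_pack I (map \<pi> [0..<t]) bins \<Longrightarrow> bf_invariant t bins"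
proof (induction t arbitrary: bins)
  case 0
  then have "bins = []"
    by (auto elim: bf_pack.cases)
  then show ?case
    using bf_invariant_Nil by simp
next
  case (Suc t)
  obtain bins0 where pack: "bf_pack I (map \<pi> [0..<t]) bins0" and step: "bf_step I bins0 (\<pi> t) bins"
    using Suc.prems(2) by (auto elim: bf_pack_snocE)
  show ?case
    using bf_invariant_step[OF _ Suc.IH[OF _ pack] step] Suc.prems(1) by simp
qed

theorem card_large_first_le_LM_bins:
  assumes "bf_pack I (map \<pi> [0..<length I]) bins"
  shows "card {i. i < k \<and> inv \<pi> (l i) < inv \<pi> (m i)} \<le> LM_bins I bins"
proof -
  obtain D \<phi> where "matching (length I) bins D \<phi>" "card (started (length I)) \<le> card D + LM_bins I bins"
    using bf_invariant_bf_pack[OF order_refl assms] by (auto simp: bf_invariant_def)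
  moreover have "pending (length I) = {}"
    using pair_items inv_perm_less by (force simp: pending_def)
  moreover have "started (length I) = {i. i < k \<and> inv \<pi> (l i) < inv \<pi> (m i)}"
    using pair_items inv_perm_less by (force simp: started_def)
  ultimately show ?thesis
    by (simp add: matching_def)
qed

end

lemma distinct_concat_nth_disjoint:
  assumes "distinct (concat xss)" "a < b" "b < length xss"
  shows "set (xss ! a) \<inter> set (xss ! b) = {}"
proof -
  have "xss ! a \<in> set (take b xss)"
    using assms(2,3) by (metis in_set_conv_nth length_take min.absorb4 nth_take)
  moreover have "xss ! b \<in> set (drop b xss)"
    using assms(3) by (metis Cons_nth_drop_Suc list.set_intros(1))
  moreover have "set (concat (take b xss)) \<inter> set (concat (drop b xss)) = {}"
    using assms(1) by (metis append_take_drop_id concat_append distinct_append)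
  ultimately show ?thesis by auto
qed

lemma load_mset_pair:
  assumes "mset B = {#a, b#}"
  shows "load I B = I ! a + I ! b"
proof -
  have "load I B = sum_mset (image_mset ((!) I) (mset B))"
    unfolding load_def by (metis mset_map sum_mset_sum_list)
  then show ?thesis
    using assms by simp
qed

lemma distinct_concat_packing: "is_packing I P \<Longrightarrow> distinct (concat P)"
  unfolding is_packing_def by (metis distinct_upt mset_eq_imp_distinct_iff)

lemma packing_item_less: "is_packing I P \<Longrightarrow> B \<in> set P \<Longrightarrow> x \<in> set B \<Longrightarrow> x < length I"
  unfolding is_packing_def by (metis UN_I atLeastLessThan_iff mset_eq_setD set_concat set_upt)

lemma inj_on_packing_choice:
  assumes P: "is_packing I P" and f: "\<And>i. i < length P \<Longrightarrow> f i \<in> set (P ! i)"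
  shows "inj_on f {..<length P}"
proof (rule inj_onI)
  fix a b assume a: "a \<in> {..<length P}" and b: "b \<in> {..<length P}" and eq: "f a = f b"
  have "set (P ! a) \<inter> set (P ! b) = {}" if "a < b" "b < length P" for a b
    using distinct_concat_nth_disjoint[OF distinct_concat_packing[OF P] that] .
  then show "a = b"
    using a b eq f[of a] f[of b] by (cases a b rule: linorder_cases) auto
qed

lemma LM_pairs_packing:
  assumes sizes: "\<forall>x\<in>set I. 1/3 < x \<and> x \<le> 1" and packing: "is_packing I P"
    and pairs: "\<forall>i<length P. mset (P ! i) = {#l i, m i#} \<and> large (I ! l i) \<and> medium (I ! m i)"
    and perm: "\<pi> permutes {..<length I}"
  shows "LM_pairs I (length P) l m \<pi>"
proof
  have set_P: "set (P ! i) = {l i, m i}" if "i < length P" for i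
    using arg_cong[of _ _ set_mset, OF pairs[rule_format, OF that, THEN conjunct1]] by simp
  show "\<forall>x\<in>set I. 1/3 < x \<and> x \<le> 1"
    by (fact sizes)
  show "l i < length I \<and> m i < length I" if "i < length P" for i
    using packing_item_less[OF packing] set_P[OF that] that by (metis insertCI nth_mem)
  show "large (I ! l i) \<and> medium (I ! m i) \<and> I ! l i + I ! m i \<le> 1" if "i < length P" for i
  proof -
    have "load I (P ! i) \<le> 1"
      using packing nth_mem[OF that] unfolding is_packing_def by blast
    then show ?thesis
      using pairs that load_mset_pair[of "P ! i" "l i" "m i" I] by simp
  qed
  show "inj_on l {..<length P}" "inj_on m {..<length P}"
    using inj_on_packing_choice[OF packing] set_P by auto
  show "\<pi> permutes {..<length I}"
    by (fact perm)
qed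

theorem lemma10:
  fixes I :: "real list" and P :: "nat list list" and k :: nat
    and l m :: "nat \<Rightarrow> nat" and \<pi> :: "nat \<Rightarrow> nat" and bins :: "nat list list"
  assumes sizes: "\<forall>x\<in>set I. 1/3 < x \<and> x \<le> 1"
    and packing: "is_packing I P"
    and opt: "length P = OPT I" and k_def: "k = OPT I"
    and bins_LM: "\<forall>i<k. mset (P ! i) = {#l i, m i#} \<and> large (I ! l i) \<and> medium (I ! m i)"
    and perm: "\<pi> permutes {..<length I}"
    and bf: "bf_pack I (map \<pi> [0..<length I]) bins"
  shows "card {i. i < k \<and> inv \<pi> (l i) < inv \<pi> (m i)} \<le> length (filter (is_LM_bin I) bins)"
proof -
  have "k = length P"
    using opt k_def by simp
  then interpret LM_pairs I k l m \<pi>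
    using LM_pairs_packing[OF sizes packing _ perm] bins_LM by simp
  show ?thesis
    by (rule card_large_first_le_LM_bins[OF bf])
qed

end
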